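(* Let $n\geq2$. Every nonzero homogeneous harmonic polynomial $h$ on $\mathbb{R}^{n+1}$ which is $(n+2)$-symmetric and satisfies $\int_{B_1}h(y)\,dy=0$ has degree at least $3$.
   Context: Fix $n+2$ points $q_1,\dots,q_{n+2}\in\mathbb{S}^n\subset\mathbb{R}^{n+1}$ spread evenly on $\mathbb{S}^n$ (vertices of an inscribed regular simplex). $\mathcal{S}_{n+2}(q)$ is the set of rotations $\phi\in SO(n+1)$ mapping $\{q_1,\dots,q_{n+2}\}$ onto itself; $h$ is $(n+2)$-symmetric if $h\circ\phi=h$ for all $\phi\in\mathcal{S}_{n+2}(q)$. $B_1$ is the unit ball of $\mathbb{R}^{n+1}$. *)

theory Defs
  imports "HOL-Analysis.Analysis"
begin

definition monomial_fn :: "('n::finite \<Rightarrow> nat) \<Rightarrow> real^'n \<Rightarrow> real" where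
  "monomial_fn \<alpha> x = (\<Prod>i\<in>UNIV. (x $ i) ^ (\<alpha> i))"

definition homogeneous_poly :: "nat \<Rightarrow> (real^'n::finite \<Rightarrow> real) \<Rightarrow> bool" where
  "homogeneous_poly d h \<longleftrightarrow>
     (\<exists>c :: ('n \<Rightarrow> nat) \<Rightarrow> real.
        h = (\<lambda>x. \<Sum>\<alpha>\<in>{\<alpha>. sum \<alpha> UNIV = d}. c \<alpha> * monomial_fn \<alpha> x))"

definition second_partial :: "'n::finite \<Rightarrow> (real^'n \<Rightarrow> real) \<Rightarrow> real^'n \<Rightarrow> real" where
  "second_partial i h x =
     deriv (\<lambda>t. deriv (\<lambda>s. h (x + s *\<^sub>R axis i 1)) t) 0"

definition laplacian :: "(real^'n::finite \<Rightarrow> real) \<Rightarrow> real^'n \<Rightarrow> real" where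
  "laplacian h x = (\<Sum>i\<in>UNIV. second_partial i h x)"

definition harmonic :: "(real^'n::finite \<Rightarrow> real) \<Rightarrow> bool" where
  "harmonic h \<longleftrightarrow> (\<forall>x. laplacian h x = 0)"

definition sym_rotations :: "(real^'n::finite) set \<Rightarrow> (real^'n^'n) set" where
  "sym_rotations Q = {A. orthogonal_matrix A \<and> det A = 1 \<and> (\<lambda>x. A *v x) ` Q = Q}"

definition symmetric_wrt :: "(real^'n::finite) set \<Rightarrow> (real^'n \<Rightarrow> real) \<Rightarrow> bool" where
  "symmetric_wrt Q h \<longleftrightarrow> (\<forall>A\<in>sym_rotations Q. \<forall>x. h (A *v x) = h x)"

end

(* Polynomials of degree at most 2 are constants, linear forms or quadratic forms. The rotation
   group of the simplex contains the 3-cycles of vertices (products of two reflections swapping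
   vertices); with at least three vertices these act transitively on vertices and, up to order,
   on pairs of distinct vertices. Since the vertices sum to 0 and span the space, an invariant
   linear form vanishes and an invariant quadratic form is a multiple of |x|^2, which is harmonic
   only when it is 0. A constant with vanishing integral over the ball is 0. *)

theory Submission
  imports Defs
begin

lemma monomial_fn_add: "monomial_fn (\<lambda>j. \<alpha> j + \<beta> j) x = monomial_fn \<alpha> x * monomial_fn \<beta> x"
  by (simp add: monomial_fn_def power_add prod.distrib)

lemma monomial_fn_coordinate: "monomial_fn (\<lambda>j. if j = i then 1 else 0) x = x $ i"
  by (simp add: monomial_fn_def if_distrib[of "power _"] cong: if_cong)

lemma monomial_fn_eq_prod_coordinates:
  fixes \<alpha> :: "'n::finite \<Rightarrow> nat"
  assumes "sum \<alpha> UNIV = d"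
  shows "\<exists>g. \<forall>x::real^'n. monomial_fn \<alpha> x = (\<Prod>k<d. x $ g k)"
  using assms
proof (induction d arbitrary: \<alpha>)
  case 0
  then show ?case by (simp add: monomial_fn_def)
next
  case (Suc d)
  then obtain i where "\<alpha> i > 0"
    by (metis gr0I sum.neutral nat.distinct(1))
  define \<delta> where "\<delta> = (\<lambda>j. if j = i then 1 else 0 :: nat)"
  define \<beta> where "\<beta> j = \<alpha> j - \<delta> j" for j
  have \<alpha>: "\<alpha> = (\<lambda>j. \<beta> j + \<delta> j)"
    using \<open>\<alpha> i > 0\<close> by (auto simp: \<beta>_def \<delta>_def fun_eq_iff)
  have "sum \<beta> UNIV = d"
    using Suc.prems unfolding \<alpha> by (simp add: sum.distrib \<delta>_def)
  then obtain g where g: "\<And>x::real^'n. monomial_fn \<beta> x = (\<Prod>k<d. x $ g k)"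
    using Suc.IH by blast
  have "monomial_fn \<alpha> x = (\<Prod>k<Suc d. x $ (g(d := i)) k)" for x :: "real^'n"
    unfolding \<alpha> monomial_fn_add g \<delta>_def monomial_fn_coordinate by simp
  then show ?case by blast
qed

lemma homogeneous_poly_eq_sum_prod_coordinates:
  fixes h :: "real^'n::finite \<Rightarrow> real"
  assumes "homogeneous_poly d h"
  obtains I :: "('n \<Rightarrow> nat) set" and c :: "('n \<Rightarrow> nat) \<Rightarrow> real" and g
  where "h = (\<lambda>x. \<Sum>\<alpha>\<in>I. c \<alpha> * (\<Prod>k<d. x $ g \<alpha> k))"
proof -
  obtain c where h: "h = (\<lambda>x. \<Sum>\<alpha>\<in>{\<alpha>. sum \<alpha> UNIV = d}. c \<alpha> * monomial_fn \<alpha> x)"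
    using assms unfolding homogeneous_poly_def by blast
  have "\<forall>\<alpha>\<in>{\<alpha>. sum \<alpha> UNIV = d}. \<exists>g. \<forall>x::real^'n. monomial_fn \<alpha> x = (\<Prod>k<d. x $ g k)"
    using monomial_fn_eq_prod_coordinates by blast
  then obtain g where
    "\<And>\<alpha> x. \<alpha> \<in> {\<alpha>. sum \<alpha> UNIV = d} \<Longrightarrow> monomial_fn \<alpha> (x::real^'n) = (\<Prod>k<d. x $ g \<alpha> k)"
    by metis
  then show thesis
    by (intro that[where I = "{\<alpha>. sum \<alpha> UNIV = d}" and c = c and g = g]) (simp add: h)
qed

lemma homogeneous_poly_0_const:
  fixes h :: "real^'n::finite \<Rightarrow> real"
  assumes "homogeneous_poly 0 h"
  obtains c where "h = (\<lambda>_. c)"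
proof -
  obtain I :: "('n \<Rightarrow> nat) set" and c and g :: "('n \<Rightarrow> nat) \<Rightarrow> nat \<Rightarrow> 'n"
    where "h = (\<lambda>x. \<Sum>\<alpha>\<in>I. c \<alpha> * (\<Prod>k<0. x $ g \<alpha> k))"
    using homogeneous_poly_eq_sum_prod_coordinates[OF assms] by blast
  then show thesis
    by (intro that[of "\<Sum>\<alpha>\<in>I. c \<alpha>"]) simp
qed

lemma homogeneous_poly_1_linear:
  fixes h :: "real^'n::finite \<Rightarrow> real"
  assumes "homogeneous_poly 1 h"
  shows "linear h"
proof -
  obtain I :: "('n \<Rightarrow> nat) set" and c and g :: "('n \<Rightarrow> nat) \<Rightarrow> nat \<Rightarrow> 'n"
    where h: "h = (\<lambda>x. \<Sum>\<alpha>\<in>I. c \<alpha> * (\<Prod>k<1. x $ g \<alpha> k))"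
    using homogeneous_poly_eq_sum_prod_coordinates[OF assms] by blast
  show ?thesis
    unfolding h by (intro linearI) (simp_all add: sum.distrib sum_distrib_left distrib_left mult.left_commute)
qed

lemma homogeneous_poly_2_quadratic_form:
  fixes h :: "real^'n::finite \<Rightarrow> real"
  assumes "homogeneous_poly 2 h"
  obtains P where "bilinear P" and "\<And>u v. P u v = P v u" and "\<And>x. h x = P x x"
proof -
  obtain I :: "('n \<Rightarrow> nat) set" and c and g :: "('n \<Rightarrow> nat) \<Rightarrow> nat \<Rightarrow> 'n"
    where h: "h = (\<lambda>x. \<Sum>\<alpha>\<in>I. c \<alpha> * (\<Prod>k<2. x $ g \<alpha> k))"
    using homogeneous_poly_eq_sum_prod_coordinates[OF assms] by blast
  define P where "P u v = (\<Sum>\<alpha>\<in>I. c \<alpha> / 2 * (u $ g \<alpha> 0 * v $ g \<alpha> 1 + v $ g \<alpha> 0 * u $ g \<alpha> 1))"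
    for u v :: "real^'n"
  show thesis
  proof
    show "bilinear P"
      unfolding bilinear_def P_def
      by (intro allI conjI linearI;
          simp only: vector_add_component vector_scaleR_component real_scaleR_def
            sum.distrib[symmetric] sum_distrib_left;
          auto intro!: sum.cong simp: algebra_simps)
    show "P u v = P v u" for u v
      by (simp add: P_def add.commute)
    show "h x = P x x" for x
      by (simp add: h P_def numeral_2_eq_2)
  qed
qed

lemma integral_ball_const_eq_0_iff:
  fixes a :: "'a::euclidean_space" and c :: real
  assumes "0 < r"
  shows "integral (ball a r) (\<lambda>_. c) = 0 \<longleftrightarrow> c = 0"
proof -
  have "integral (ball a r) (\<lambda>_. c) = c * integral (ball a r) (\<lambda>_. 1)"
    using integral_mult_right[of "ball a r" c "\<lambda>_. 1"] by simp
  also have "integral (ball a r) (\<lambda>_. 1) = measure lebesgue (ball a r)"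
    by (rule lmeasure_integral[symmetric]) simp
  finally show ?thesis
    using assms content_ball_gt_0_iff[of a r] by simp
qed

lemma laplacian_scaled_inner_self:
  "laplacian (\<lambda>y. a * (y \<bullet> y)) (x :: real^'n::finite) = 2 * a * CARD('n)"
proof -
  have "second_partial i (\<lambda>y. a * (y \<bullet> y)) x = 2 * a" for i
  proof -
    have line: "(\<lambda>s. a * ((x + s *\<^sub>R axis i 1) \<bullet> (x + s *\<^sub>R axis i 1)))
        = (\<lambda>s. a * (x \<bullet> x) + 2 * a * x $ i * s + a * s\<^sup>2)"
      by (rule ext) (simp add: inner_add_left inner_add_right inner_axis inner_commute[of "axis i 1" x]
          algebra_simps power2_eq_square)
    have d1: "deriv (\<lambda>s. a * (x \<bullet> x) + 2 * a * x $ i * s + a * s\<^sup>2) t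
        = 2 * a * x $ i + 2 * a * t" for t
      by (rule DERIV_imp_deriv) (auto intro!: derivative_eq_intros)
    have d2: "deriv (\<lambda>t. 2 * a * x $ i + 2 * a * t) 0 = 2 * a"
      by (rule DERIV_imp_deriv) (auto intro!: derivative_eq_intros)
    show ?thesis
      unfolding second_partial_def line d1 d2 ..
  qed
  then show ?thesis
    by (simp add: laplacian_def)
qed

(* For u = 0 the division by zero makes this the identity, so no lemma below needs u \<noteq> 0. *)
definition reflection :: "'a::real_inner \<Rightarrow> 'a \<Rightarrow> 'a" where
  "reflection u x = x - (2 * (u \<bullet> x) / (u \<bullet> u)) *\<^sub>R u"

lemma linear_reflection: "linear (reflection u)"
  unfolding reflection_def
  by (rule linearI) (simp_all add: add_divide_distrib algebra_simps)

lemma inner_reflection: "reflection u x \<bullet> reflection u y = x \<bullet> y"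
proof (cases "u = 0")
  case False
  then have "u \<bullet> u \<noteq> 0" by simp
  then show ?thesis
    unfolding reflection_def
    by (simp add: inner_diff_left inner_diff_right inner_commute field_simps)
qed (simp add: reflection_def)

lemma orthogonal_transformation_reflection: "orthogonal_transformation (reflection u)"
  by (simp add: orthogonal_transformation_def linear_reflection inner_reflection)

lemma reflection_uminus [simp]: "reflection (- u) = reflection u"
  by (simp add: reflection_def fun_eq_iff)

lemma reflection_fixes_orthogonal: "u \<bullet> x = 0 \<Longrightarrow> reflection u x = x"
  by (simp add: reflection_def)

lemma reflection_diff_swaps:
  assumes "norm a = norm b"
  shows "reflection (a - b) a = b"
proof (cases "a = b")
  case False
  have "a \<bullet> a = b \<bullet> b" using assms by (simp add: dot_square_norm)
  then have "(a - b) \<bullet> (a - b) = 2 * ((a - b) \<bullet> a)"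
    by (simp add: inner_diff_left inner_diff_right inner_commute)
  moreover have "(a - b) \<bullet> (a - b) \<noteq> 0" using False by simp
  ultimately show ?thesis by (simp add: reflection_def)
qed (simp add: reflection_def)

lemma det_matrix_eq_1_if_cube_id:
  fixes f :: "real^'n \<Rightarrow> real^'n"
  assumes "linear f" and "f \<circ> f \<circ> f = id"
  shows "det (matrix f) = 1"
proof -
  have "matrix f ** matrix f ** matrix f = mat 1"
    using assms by (metis matrix_compose linear_compose matrix_id_mat_1)
  then have "det (matrix f) ^ 3 = 1"
    by (metis det_mul det_I power3_eq_cube)
  then show ?thesis
    using odd_real_root_power_cancel[of 3 "det (matrix f)"] by simp
qed

lemma bilinear_invariant_if_diagonal_invariant:
  fixes P :: "'a::real_vector \<Rightarrow> 'a \<Rightarrow> real"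
  assumes "bilinear P" and "\<And>u v. P u v = P v u" and "linear f" and "\<And>x. P (f x) (f x) = P x x"
  shows "P (f u) (f v) = P u v"
proof -
  have polar: "P (x + y) (x + y) = P x x + 2 * P x y + P y y" for x y
    using assms(2)[of y x] by (simp add: bilinear_ladd[OF assms(1)] bilinear_radd[OF assms(1)])
  have "P (f (u + v)) (f (u + v)) = P (u + v) (u + v)" by (rule assms(4))
  then show ?thesis by (simp add: linear_add[OF assms(3)] polar assms(4))
qed

locale regular_simplex =
  fixes n :: nat and q :: "nat \<Rightarrow> real^'n::finite"
  assumes card_eq: "CARD('n) = n + 1"
    and n_pos: "1 \<le> n"
    and norm_vertex: "\<forall>i<n+2. norm (q i) = 1"
    and inner_distinct_vertices:
      "\<forall>i<n+2. \<forall>j<n+2. i \<noteq> j \<longrightarrow> q i \<bullet> q j = - 1 / real (n + 1)"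
begin

abbreviation vertices :: "(real^'n) set" where
  "vertices \<equiv> q ` {..<n+2}"

lemma inner_vertices:
  "i < n+2 \<Longrightarrow> j < n+2 \<Longrightarrow> q i \<bullet> q j = (if i = j then 1 else - 1 / real (n + 1))"
  using norm_vertex inner_distinct_vertices by (simp add: dot_square_norm)

lemma sum_inner_vertices:
  assumes "i < n+2"
  shows "(\<Sum>j<n+2. q i \<bullet> q j) = 0"
proof -
  have "(\<Sum>j<n+2. q i \<bullet> q j) = q i \<bullet> q i + (\<Sum>j\<in>{..<n+2} - {i}. q i \<bullet> q j)"
    by (rule sum.remove) (use assms in auto)
  also have "\<dots> = 1 + (\<Sum>j\<in>{..<n+2} - {i}. - 1 / real (n + 1))"
    using assms by (simp add: inner_vertices)
  also have "\<dots> = 0"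
    using assms by simp
  finally show ?thesis .
qed

lemma sum_vertices: "(\<Sum>i<n+2. q i) = 0"
proof -
  have "(\<Sum>i<n+2. q i) \<bullet> (\<Sum>j<n+2. q j) = (\<Sum>i<n+2. q i \<bullet> (\<Sum>j<n+2. q j))"
    by (rule inner_sum_left)
  also have "\<dots> = (\<Sum>i<n+2. \<Sum>j<n+2. q i \<bullet> q j)"
    by (simp only: inner_sum_right)
  also have "\<dots> = 0"
    by (rule sum.neutral) (metis lessThan_iff sum_inner_vertices)
  finally show ?thesis
    by simp
qed

lemma inj_on_vertices: "inj_on q {..<n+2}"
proof (rule inj_onI, rule ccontr)
  fix i j assume "i \<in> {..<n+2}" "j \<in> {..<n+2}" "q i = q j" "i \<noteq> j"
  then have "1 = - 1 / real (n + 1)"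
    using inner_vertices[of i i] inner_vertices[of i j] by simp
  then show False
    by (simp add: field_simps)
qed

lemma independent_vertices: "independent (q ` {..n})"
proof (rule real_vector.independent_if_scalars_zero)
  fix f x
  assume combination: "(\<Sum>v\<in>q ` {..n}. f v *\<^sub>R v) = 0" and x: "x \<in> q ` {..n}"
  define c where "c i = f (q i)" for i
  define S where "S = (\<Sum>i\<le>n. c i)"
  have "inj_on q {..n}"
    using inj_on_vertices by (rule inj_on_subset) auto
  then have "(\<Sum>i\<le>n. c i *\<^sub>R q i) = 0"
    using combination by (simp add: sum.reindex c_def)
  have c_eq: "real (n + 2) * c j = S" if "j \<le> n" for j
  proof -
    have "0 = real (n + 1) * ((\<Sum>i\<le>n. c i *\<^sub>R q i) \<bullet> q j)"
      using \<open>(\<Sum>i\<le>n. c i *\<^sub>R q i) = 0\<close> by simp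
    also have "\<dots> = (\<Sum>i\<le>n. c i * (real (n + 1) * (q i \<bullet> q j)))"
      by (simp add: inner_sum_left sum_distrib_left mult.left_commute)
    also have "\<dots> = (\<Sum>i\<le>n. c i * ((if i = j then real (n + 2) else 0) - 1))"
      using that by (intro sum.cong) (auto simp: inner_vertices)
    also have "\<dots> = real (n + 2) * c j - S"
      using that
      by (simp add: right_diff_distrib sum_subtractf S_def if_distrib[of "\<lambda>t. c _ * t"] cong: if_cong)
    finally show ?thesis by simp
  qed
  have "real (n + 2) * S = real (n + 1) * S"
    using c_eq by (simp add: S_def sum_distrib_left)
  then have "S = 0" by simp
  then show "f x = 0"
    using x c_eq by (auto simp: c_def)
qed simp

lemma span_vertices: "span vertices = UNIV"
proof -
  have "dim (q ` {..n}) = card (q ` {..n})"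
    by (rule real_vector.dim_eq_card_independent[OF independent_vertices])
  also have "\<dots> = n + 1"
    using inj_on_vertices by (subst card_image) (auto intro: inj_on_subset)
  finally have "span (q ` {..n}) = UNIV"
    using card_eq by (simp add: eucl.dim_eq_full[symmetric] DIM_cart)
  moreover have "span (q ` {..n}) \<subseteq> span vertices"
    by (rule span_mono) auto
  ultimately show ?thesis
    by auto
qed

lemma exists_third_vertex: "\<exists>k<n+2. k \<noteq> i \<and> k \<noteq> j"
proof -
  have "\<exists>k\<in>{0, 1, 2}. k \<noteq> i \<and> k \<noteq> j"
    by auto
  then show ?thesis
    using n_pos by auto
qed

lemma reflection_vertex:
  assumes "i < n+2" and "j < n+2" and "l < n+2"
  shows "reflection (q i - q j) (q l) = q (if l = i then j else if l = j then i else l)"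
proof -
  have norm_eq: "norm (q i) = norm (q j)"
    using assms norm_vertex by simp
  consider "l = i" | "l = j" "l \<noteq> i" | "l \<noteq> i" "l \<noteq> j"
    by blast
  then show ?thesis
  proof cases
    case 1
    then show ?thesis
      using reflection_diff_swaps[OF norm_eq] by simp
  next
    case 2
    have "reflection (q i - q j) = reflection (q j - q i)"
      by (metis minus_diff_eq reflection_uminus)
    with 2 show ?thesis
      using reflection_diff_swaps[OF norm_eq[symmetric]] by simp
  next
    case 3
    then have "(q i - q j) \<bullet> q l = 0"
      using assms by (simp add: inner_diff_left inner_vertices)
    with 3 show ?thesis
      by (simp add: reflection_fixes_orthogonal)
  qed
qed

definition vertex_cycle :: "nat \<Rightarrow> nat \<Rightarrow> nat \<Rightarrow> real^'n \<Rightarrow> real^'n" where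
  "vertex_cycle i j k = reflection (q i - q j) \<circ> reflection (q j - q k)"

lemma orthogonal_transformation_vertex_cycle: "orthogonal_transformation (vertex_cycle i j k)"
  unfolding vertex_cycle_def
  by (intro orthogonal_transformation_compose orthogonal_transformation_reflection)

lemma linear_vertex_cycle: "linear (vertex_cycle i j k)"
  using orthogonal_transformation_vertex_cycle by (rule orthogonal_transformation_linear)

lemma vertex_cycle_vertex:
  assumes "i < n+2" "j < n+2" "k < n+2" "l < n+2" and "distinct [i, j, k]"
  shows "vertex_cycle i j k (q l)
    = q (if l = i then j else if l = j then k else if l = k then i else l)"
  using assms by (auto simp: vertex_cycle_def reflection_vertex)

lemma vertex_cycle_cube:
  assumes "i < n+2" "j < n+2" "k < n+2" and "distinct [i, j, k]"
  shows "vertex_cycle i j k \<circ> vertex_cycle i j k \<circ> vertex_cycle i j k = id"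
    (is "?g = id")
proof -
  have "linear ?g"
    by (intro linear_compose linear_vertex_cycle)
  have on_vertices: "?g v = id v" if v: "v \<in> vertices" for v
  proof -
    obtain l where l: "v = q l" "l \<in> {..<n+2}"
      by (rule imageE[OF v])
    consider "l = i" | "l = j" | "l = k" | "l \<notin> {i, j, k}"
      by blast
    then show ?thesis
      by cases (use assms l in \<open>simp_all add: vertex_cycle_vertex\<close>)
  qed
  have "?g x = id x" for x
  proof (rule linear_eq_on_span[OF \<open>linear ?g\<close> linear_id])
    show "x \<in> span vertices"
      unfolding span_vertices by (rule UNIV_I)
  qed (rule on_vertices)
  then show ?thesis
    by blast
qed

lemma matrix_vertex_cycle_mult: "matrix (vertex_cycle i j k) *v x = vertex_cycle i j k x"
  using linear_vertex_cycle by (metis linear_matrix_vector_mul_eq matrix_works)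

lemma vertex_cycle_in_sym_rotations:
  assumes "i < n+2" "j < n+2" "k < n+2" and "distinct [i, j, k]"
  shows "matrix (vertex_cycle i j k) \<in> sym_rotations vertices"
proof -
  let ?f = "vertex_cycle i j k"
  have "orthogonal_matrix (matrix ?f)"
    using orthogonal_transformation_vertex_cycle orthogonal_transformation_matrix by blast
  moreover have "det (matrix ?f) = 1"
    by (rule det_matrix_eq_1_if_cube_id[OF linear_vertex_cycle vertex_cycle_cube[OF assms]])
  moreover have into: "?f v \<in> vertices" if v: "v \<in> vertices" for v
  proof -
    obtain l where "v = q l" "l \<in> {..<n+2}"
      by (rule imageE[OF v])
    then show ?thesis
      using assms by (simp add: vertex_cycle_vertex)
  qed
  have onto: "v \<in> ?f ` vertices" if "v \<in> vertices" for v
  proof -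
    have "v = ?f (?f (?f v))"
      using vertex_cycle_cube[OF assms] by (metis comp_apply id_apply)
    then show ?thesis
      using into that by (metis imageI)
  qed
  have "?f ` vertices = vertices"
    using into onto by (intro equalityI image_subsetI subsetI)
  ultimately show ?thesis
    by (simp add: sym_rotations_def matrix_vertex_cycle_mult)
qed

lemma symmetric_wrt_vertices_cycle:
  assumes "symmetric_wrt vertices h"
    and "i < n+2" "j < n+2" "k < n+2" and "distinct [i, j, k]"
  shows "h (vertex_cycle i j k x) = h x"
proof -
  have "matrix (vertex_cycle i j k) \<in> sym_rotations vertices"
    using assms(2-) by (rule vertex_cycle_in_sym_rotations)
  then have "h (matrix (vertex_cycle i j k) *v x) = h x"
    using assms(1) by (simp add: symmetric_wrt_def)
  then show ?thesis
    by (simp add: matrix_vertex_cycle_mult)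
qed

lemma symmetric_wrt_vertices_eq:
  assumes "symmetric_wrt vertices h" and "i < n+2" "j < n+2"
  shows "h (q i) = h (q j)"
proof (cases "i = j")
  case False
  obtain k where "k < n+2" "k \<noteq> i" "k \<noteq> j"
    using exists_third_vertex by blast
  with False assms have "h (vertex_cycle i j k (q i)) = h (q i)"
    by (intro symmetric_wrt_vertices_cycle) auto
  moreover have "vertex_cycle i j k (q i) = q j"
    using False assms \<open>k < n+2\<close> \<open>k \<noteq> i\<close> \<open>k \<noteq> j\<close> by (simp add: vertex_cycle_vertex)
  ultimately show ?thesis
    by simp
qed simp

lemma linear_symmetric_wrt_vertices_eq_0:
  fixes L :: "real^'n \<Rightarrow> real"
  assumes "linear L" and "symmetric_wrt vertices L"
  shows "L = (\<lambda>_. 0)"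
proof -
  have "0 = L (\<Sum>l<n+2. q l)"
    using linear_0[OF assms(1)] by (simp only: sum_vertices)
  also have "\<dots> = (\<Sum>l<n+2. L (q 0))"
    unfolding linear_sum[OF assms(1)]
    by (intro sum.cong refl symmetric_wrt_vertices_eq[OF assms(2)]) auto
  finally have "L (q 0) = 0"
    by simp
  have on_vertices: "L v = 0" if v: "v \<in> vertices" for v
  proof -
    obtain l where "v = q l" "l \<in> {..<n+2}"
      by (rule imageE[OF v])
    then show ?thesis
      using symmetric_wrt_vertices_eq[OF assms(2), of l 0] \<open>L (q 0) = 0\<close> by simp
  qed
  have "L x = 0" for x
  proof (rule real_vector.linear_eq_0_on_span[OF assms(1)])
    show "x \<in> span vertices"
      unfolding span_vertices by (rule UNIV_I)
  qed (rule on_vertices)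
  then show ?thesis
    by (simp add: fun_eq_iff)
qed

lemma bilinear_symmetric_wrt_vertices_off_diagonal:
  fixes P :: "real^'n \<Rightarrow> real^'n \<Rightarrow> real"
  assumes bil: "bilinear P" and sym: "\<And>u v. P u v = P v u"
    and inv: "symmetric_wrt vertices (\<lambda>x. P x x)"
    and "i < n+2" "j < n+2" "i \<noteq> j"
  shows "P (q i) (q j) = P (q 0) (q 1)"
proof -
  have cycle: "P (vertex_cycle i j k u) (vertex_cycle i j k v) = P u v"
    if "i < n+2" "j < n+2" "k < n+2" "distinct [i, j, k]" for i j k u v
    using bil sym linear_vertex_cycle symmetric_wrt_vertices_cycle[OF inv that]
    by (rule bilinear_invariant_if_diagonal_invariant)
  have row: "P (q i) (q j) = P (q i) (q k)"
    if "i < n+2" "j < n+2" "k < n+2" "i \<noteq> j" "i \<noteq> k" for i j k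
  proof (cases "j = k")
    case False
    have "P (q i) (q k) = P (vertex_cycle j i k (q j)) (vertex_cycle j i k (q i))"
      using that False by (simp add: vertex_cycle_vertex)
    also have "\<dots> = P (q j) (q i)"
      using that False by (intro cycle) auto
    finally show ?thesis
      using sym by simp
  qed simp
  show ?thesis
  proof (cases "i = 0")
    case True
    then show ?thesis
      using assms(4-) row[of 0 j 1] by simp
  next
    case False
    then have "P (q i) (q j) = P (q 0) (q i)"
      using assms(4-) row[of i j 0] sym by simp
    also have "\<dots> = P (q 0) (q 1)"
      using assms(4-) False row[of 0 i 1] by simp
    finally show ?thesis .
  qed
qed

lemma bilinear_symmetric_wrt_vertices_eq_inner:
  fixes P :: "real^'n \<Rightarrow> real^'n \<Rightarrow> real"
  assumes bil: "bilinear P" and sym: "\<And>u v. P u v = P v u"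
    and inv: "symmetric_wrt vertices (\<lambda>x. P x x)"
  shows "P u v = P (q 0) (q 0) * (u \<bullet> v)"
proof -
  define a where "a = P (q 0) (q 0)"
  define b where "b = P (q 0) (q 1)"
  have off_diagonal: "P (q i) (q j) = b" if "i < n+2" "j < n+2" "i \<noteq> j" for i j
    unfolding b_def using bil sym inv that by (rule bilinear_symmetric_wrt_vertices_off_diagonal)
  have diagonal: "P (q i) (q i) = a" if "i < n+2" for i
    using symmetric_wrt_vertices_eq[OF inv that, of 0] by (simp add: a_def)
  have "0 = P (q 0) (\<Sum>j<n+2. q j)"
    by (simp only: sum_vertices bilinear_rzero[OF bil])
  also have "\<dots> = (\<Sum>j<n+2. P (q 0) (q j))"
    using bil unfolding bilinear_def by (intro linear_sum) simp
  also have "\<dots> = P (q 0) (q 0) + (\<Sum>j\<in>{..<n+2} - {0}. P (q 0) (q j))"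
    by (rule sum.remove) auto
  also have "\<dots> = a + real (n + 1) * b"
    by (simp add: a_def off_diagonal)
  finally have "b = a * (- 1 / real (n + 1))"
    by (simp add: field_simps)
  then have on_vertices: "P (q i) (q j) = a * (q i \<bullet> q j)" if "i < n+2" "j < n+2" for i j
    using that diagonal off_diagonal by (simp add: inner_vertices)
  have "bilinear (\<lambda>u v. a * (u \<bullet> v))"
    by (auto simp: bilinear_def inner_add_left inner_add_right algebra_simps intro!: linearI)
  then have "P u v = a * (u \<bullet> v)"
  proof (rule bilinear_eq[OF bil _ _ _ UNIV_I UNIV_I])
    show "UNIV \<subseteq> span vertices"
      unfolding span_vertices ..
    then show "UNIV \<subseteq> span vertices" .
    show "P x y = a * (x \<bullet> y)" if "x \<in> vertices" "y \<in> vertices" for x y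
      using that on_vertices by auto
  qed
  then show ?thesis
    by (simp add: a_def)
qed

lemma homogeneous_poly_2_symmetric_wrt_vertices:
  assumes "homogeneous_poly 2 h" and "symmetric_wrt vertices h"
  obtains a where "h = (\<lambda>x. a * (x \<bullet> x))"
proof -
  obtain P where P: "bilinear P" "\<And>u v. P u v = P v u" and h: "\<And>x. h x = P x x"
    using homogeneous_poly_2_quadratic_form[OF assms(1)] by blast
  have "symmetric_wrt vertices (\<lambda>x. P x x)"
    using assms(2) unfolding h[symmetric] .
  then have "h x = P (q 0) (q 0) * (x \<bullet> x)" for x
    unfolding h by (rule bilinear_symmetric_wrt_vertices_eq_inner[OF P])
  then show thesis
    by (intro that[of "P (q 0) (q 0)"] ext)
qed

end

theorem lemma8p2:
  fixes n d :: nat and q :: "nat \<Rightarrow> real^'n::finite" and h :: "real^'n \<Rightarrow> real"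
  assumes dim: "CARD('n) = n + 1"
    and n2: "n \<ge> 2"
    and q_sphere: "\<forall>i<n+2. norm (q i) = 1"
    and q_simplex: "\<forall>i<n+2. \<forall>j<n+2. i \<noteq> j \<longrightarrow> q i \<bullet> q j = - 1 / real (n + 1)"
    and hom: "homogeneous_poly d h"
    and harm: "harmonic h"
    and nonzero: "h \<noteq> (\<lambda>x. 0)"
    and sym: "symmetric_wrt (q ` {..<n+2}) h"
    and int0: "integral (ball 0 1) h = 0"
  shows "d \<ge> 3"
proof (rule ccontr)
  interpret regular_simplex n q
    using dim n2 q_sphere q_simplex by unfold_locales auto
  assume "\<not> d \<ge> 3"
  then consider "d = 0" | "d = 1" | "d = 2"
    by linarith
  then show False
  proof cases
    case 1
    then obtain c where h_const: "h = (\<lambda>_. c)"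
      using hom homogeneous_poly_0_const by blast
    then have "c = 0"
      using int0 integral_ball_const_eq_0_iff[of 1 "0 :: real^'n" c] by simp
    with h_const nonzero show False
      by simp
  next
    case 2
    then have "linear h"
      using hom homogeneous_poly_1_linear by simp
    with sym nonzero show False
      using linear_symmetric_wrt_vertices_eq_0 by simp
  next
    case 3
    then obtain a where h_inner: "h = (\<lambda>x. a * (x \<bullet> x))"
      using hom sym homogeneous_poly_2_symmetric_wrt_vertices by blast
    then have "2 * a * CARD('n) = 0"
      using harm by (simp add: harmonic_def laplacian_scaled_inner_self)
    with h_inner nonzero show False
      by simp
  qed
qed

end
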